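(* For every positive integer $M$ and every real $s>M$, $$\frac{1}{(\pi/2)^M}\int_{\{u\in\mathbb R^M:\ \|u\|_1>s\}}\ \prod_{j=1}^M\frac{du_j}{(1+u_j^2)^2}\le\frac{M}{(s-M)^2}.$$
   Context: Here $\pi=3.14159\ldots$ and $\|u\|_1=\sum_{j=1}^M|u_j|$. *)

theory Defs
  imports "HOL-Analysis.Analysis"
begin

end

theory Submission
  imports Defs "HOL-Real_Asymp.Real_Asymp"
begin

text \<open>
  After division by \<open>(\<pi>/2)^M\<close>, the weight \<open>\<Prod>j. (1 + u\<^sub>j\<^sup>2)\<^sup>-\<^sup>2\<close> is a product
  probability density. The one-dimensional integrals \<open>\<integral> (1+x\<^sup>2)\<^sup>-\<^sup>2 = \<integral> x\<^sup>2 (1+x\<^sup>2)\<^sup>-\<^sup>2 = \<pi>/2\<close>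
  and \<open>\<integral> \<bar>x\<bar> (1+x\<^sup>2)\<^sup>-\<^sup>2 = 1\<close> show that each \<open>\<bar>u\<^sub>j\<bar>\<close> has mean \<open>2/\<pi>\<close> and second moment 1.
  By independence, \<open>\<parallel>u\<parallel>\<^sub>1\<close> has mean \<open>c = 2M/\<pi> \<le> M\<close> and variance \<open>M (1 - 4/\<pi>\<^sup>2) \<le> M\<close>,
  so Chebyshev's inequality at distance \<open>s - c \<ge> s - M\<close> gives the bound.
\<close>

definition cauchy_sq :: "real \<Rightarrow> real" where
  "cauchy_sq x = 1 / (1 + x\<^sup>2)\<^sup>2"

lemma cauchy_sq_nonneg: "0 \<le> cauchy_sq x"
  by (simp add: cauchy_sq_def)

lemma cauchy_sq_minus [simp]: "cauchy_sq (- x) = cauchy_sq x"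
  by (simp add: cauchy_sq_def)

lemma borel_measurable_cauchy_sq [measurable]: "cauchy_sq \<in> borel_measurable borel"
  unfolding cauchy_sq_def by measurable

lemma nn_integral_even:
  fixes f :: "real \<Rightarrow> real"
  assumes [measurable]: "f \<in> borel_measurable borel" and even: "\<And>x. f (- x) = f x"
  shows "(\<integral>\<^sup>+x. f x \<partial>lborel) = 2 * (\<integral>\<^sup>+x. ennreal (f x) * indicator {0..} x \<partial>lborel)"
proof -
  have "(\<integral>\<^sup>+x. f x \<partial>lborel) =
      (\<integral>\<^sup>+x. ennreal (f x) * indicator {0..} x \<partial>lborel) + (\<integral>\<^sup>+x. ennreal (f x) * indicator {..<0} x \<partial>lborel)"
    by (subst nn_integral_add [symmetric]) (auto intro!: nn_integral_cong split: split_indicator)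
  also have "(\<integral>\<^sup>+x. ennreal (f x) * indicator {..<0} x \<partial>lborel) = (\<integral>\<^sup>+x. ennreal (f x) * indicator {0<..} x \<partial>lborel)"
    using nn_integral_real_affine [of "\<lambda>x. ennreal (f x) * indicator {..<0} x" "-1" 0]
    by (simp add: even indicator_def)
  also have "\<dots> = (\<integral>\<^sup>+x. ennreal (f x) * indicator {0..} x \<partial>lborel)"
    by (rule nn_integral_cong_AE, rule eventually_mono [OF AE_lborel_singleton [of 0]])
      (auto split: split_indicator)
  finally show ?thesis
    by (simp add: mult_2)
qed

lemma nn_integral_even_FTC:
  fixes f F :: "real \<Rightarrow> real"
  assumes "f \<in> borel_measurable borel" "\<And>x. 0 \<le> f x" "\<And>x. f (- x) = f x"
    and "\<And>x. 0 \<le> x \<Longrightarrow> (F has_real_derivative f x) (at x)" and "(F \<longlongrightarrow> T) at_top"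
  shows "(\<integral>\<^sup>+x. f x \<partial>lborel) = ennreal (2 * (T - F 0))"
proof -
  have "(\<integral>\<^sup>+x. f x \<partial>lborel) = 2 * (\<integral>\<^sup>+x. ennreal (f x) * indicator {0..} x \<partial>lborel)"
    using assms(1,3) by (rule nn_integral_even)
  also have "\<dots> = 2 * ennreal (T - F 0)"
    using assms by (subst nn_integral_FTC_atLeast) auto
  finally show ?thesis
    by (simp only: ennreal_mult' ennreal_numeral zero_le_numeral)
qed

lemma nn_integral_cauchy_sq: "(\<integral>\<^sup>+x. cauchy_sq x \<partial>lborel) = ennreal (pi / 2)"
proof -
  have "(\<integral>\<^sup>+x. cauchy_sq x \<partial>lborel) = ennreal (2 * (pi / 4 - (0 / (1 + 0\<^sup>2) + arctan 0) / 2))"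
  proof (rule nn_integral_even_FTC)
    show "((\<lambda>x. (x / (1 + x\<^sup>2) + arctan x) / 2) \<longlongrightarrow> pi / 4) at_top"
      by real_asymp
    fix x :: real
    have "1 + x\<^sup>2 \<noteq> 0"
      by (metis power_one sum_power2_eq_zero_iff zero_neq_one)
    then show "((\<lambda>x. (x / (1 + x\<^sup>2) + arctan x) / 2) has_real_derivative cauchy_sq x) (at x)"
      unfolding cauchy_sq_def
      by (auto intro!: derivative_eq_intros) (simp add: divide_simps, algebra)
  qed (auto simp: cauchy_sq_nonneg)
  then show ?thesis
    by simp
qed

lemma nn_integral_abs_mult_cauchy_sq: "(\<integral>\<^sup>+x. \<bar>x\<bar> * cauchy_sq x \<partial>lborel) = 1"
proof -
  have "(\<integral>\<^sup>+x. \<bar>x\<bar> * cauchy_sq x \<partial>lborel) = ennreal (2 * (0 - - 1 / (2 * (1 + 0\<^sup>2))))"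
  proof (rule nn_integral_even_FTC)
    show "((\<lambda>x::real. - 1 / (2 * (1 + x\<^sup>2))) \<longlongrightarrow> 0) at_top"
      by real_asymp
    fix x :: real
    assume "0 \<le> x"
    moreover have "1 + x\<^sup>2 \<noteq> 0"
      by (metis power_one sum_power2_eq_zero_iff zero_neq_one)
    ultimately show "((\<lambda>x. - 1 / (2 * (1 + x\<^sup>2))) has_real_derivative \<bar>x\<bar> * cauchy_sq x) (at x)"
      unfolding cauchy_sq_def
      by (auto intro!: derivative_eq_intros) (simp add: divide_simps, algebra)
  qed (auto simp: cauchy_sq_nonneg)
  then show ?thesis
    by simp
qed

lemma nn_integral_power2_mult_cauchy_sq: "(\<integral>\<^sup>+x. x\<^sup>2 * cauchy_sq x \<partial>lborel) = ennreal (pi / 2)"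
proof -
  have "(\<integral>\<^sup>+x. x\<^sup>2 * cauchy_sq x \<partial>lborel) = ennreal (2 * (pi / 4 - (arctan 0 - 0 / (1 + 0\<^sup>2)) / 2))"
  proof (rule nn_integral_even_FTC)
    show "((\<lambda>x. (arctan x - x / (1 + x\<^sup>2)) / 2) \<longlongrightarrow> pi / 4) at_top"
      by real_asymp
    fix x :: real
    have "1 + x\<^sup>2 \<noteq> 0"
      by (metis power_one sum_power2_eq_zero_iff zero_neq_one)
    then show "((\<lambda>x. (arctan x - x / (1 + x\<^sup>2)) / 2) has_real_derivative x\<^sup>2 * cauchy_sq x) (at x)"
      unfolding cauchy_sq_def
      by (auto intro!: derivative_eq_intros) (simp add: divide_simps, algebra)
  qed (auto simp: cauchy_sq_nonneg)
  then show ?thesis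
    by simp
qed

text \<open>The zeroth and second absolute moments coincide, so only the parity of \<open>k\<close> matters.\<close>

lemma nn_integral_abs_power_mult_cauchy_sq:
  assumes "k \<le> 2"
  shows "(\<integral>\<^sup>+x. \<bar>x\<bar> ^ k * cauchy_sq x \<partial>lborel) = ennreal (pi / 2 * (2 / pi) ^ (k mod 2))"
proof -
  consider "k = 0" | "k = 1" | "k = 2"
    using assms by linarith
  then show ?thesis
    by cases (simp_all add: nn_integral_cauchy_sq nn_integral_abs_mult_cauchy_sq
        nn_integral_power2_mult_cauchy_sq)
qed

lemma nn_integral_lborel_vec_prod:
  fixes f :: "'n::finite \<Rightarrow> real \<Rightarrow> real"
  assumes [measurable]: "\<And>j. f j \<in> borel_measurable borel" and nonneg: "\<And>j x. 0 \<le> f j x"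
  shows "(\<integral>\<^sup>+u. (\<Prod>j\<in>UNIV. f j (u $ j)) \<partial>(lborel :: (real ^ 'n) measure)) =
    (\<Prod>j\<in>UNIV. \<integral>\<^sup>+x. f j x \<partial>lborel)"
proof -
  have Basis: "(Basis :: (real ^ 'n) set) = (\<lambda>j. axis j 1) ` UNIV"
    by (auto simp: Basis_vec_def)
  have inj: "inj (\<lambda>j::'n. axis j (1::real))"
    by (auto simp: inj_on_def axis_eq_axis)
  have coordinates: "ennreal (\<Prod>j\<in>UNIV. f j (u $ j)) = (\<Prod>b\<in>Basis. ennreal (f (axis_index b) (u \<bullet> b)))"
    for u :: "real ^ 'n"
    by (simp add: Basis prod.reindex [OF inj] inner_axis prod_ennreal nonneg)
  have "(\<integral>\<^sup>+u. (\<Prod>j\<in>UNIV. f j (u $ j)) \<partial>(lborel :: (real ^ 'n) measure)) =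
      (\<Prod>b\<in>(Basis :: (real ^ 'n) set). \<integral>\<^sup>+x. f (axis_index b) x \<partial>lborel)"
    unfolding coordinates by (rule nn_integral_lborel_prod) (auto simp: nonneg)
  also have "\<dots> = (\<Prod>j\<in>UNIV. \<integral>\<^sup>+x. f j x \<partial>lborel)"
    by (simp add: Basis prod.reindex [OF inj])
  finally show ?thesis .
qed

lemma has_bochner_integral_lborel_vec_prod:
  fixes f :: "'n::finite \<Rightarrow> real \<Rightarrow> real"
  assumes "\<And>j. f j \<in> borel_measurable borel" and "\<And>j x. 0 \<le> f j x"
    and "\<And>j. (\<integral>\<^sup>+x. f j x \<partial>lborel) = ennreal (I j)" and "\<And>j. 0 \<le> I j"
  shows "has_bochner_integral lborel (\<lambda>u::real ^ 'n. \<Prod>j\<in>UNIV. f j (u $ j)) (\<Prod>j\<in>UNIV. I j)"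
  using assms
  by (intro has_bochner_integral_nn_integral)
    (auto simp: nn_integral_lborel_vec_prod prod_nonneg prod_ennreal)

definition cauchy_sq_vec :: "real ^ 'n::finite \<Rightarrow> real" where
  "cauchy_sq_vec u = (\<Prod>j\<in>UNIV. cauchy_sq (u $ j))"

lemma cauchy_sq_vec_nonneg: "0 \<le> cauchy_sq_vec u"
  by (simp add: cauchy_sq_vec_def prod_nonneg cauchy_sq_nonneg)

lemma borel_measurable_cauchy_sq_vec [measurable]: "cauchy_sq_vec \<in> borel_measurable borel"
  unfolding cauchy_sq_vec_def by measurable

lemma has_bochner_integral_abs_monomial_cauchy_sq_vec:
  fixes e :: "'n::finite \<Rightarrow> nat"
  assumes "\<And>j. e j \<le> 2"
  shows "has_bochner_integral lborel (\<lambda>u. (\<Prod>j\<in>UNIV. \<bar>u $ j\<bar> ^ e j) * cauchy_sq_vec u)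
    ((pi / 2) ^ CARD('n) * (2 / pi) ^ (\<Sum>j\<in>UNIV. e j mod 2))"
proof -
  have "has_bochner_integral lborel (\<lambda>u::real ^ 'n. \<Prod>j\<in>UNIV. \<bar>u $ j\<bar> ^ e j * cauchy_sq (u $ j))
      (\<Prod>j\<in>UNIV. pi / 2 * (2 / pi) ^ (e j mod 2))"
    using assms
    by (intro has_bochner_integral_lborel_vec_prod)
      (auto simp: cauchy_sq_nonneg nn_integral_abs_power_mult_cauchy_sq)
  then show ?thesis
    by (simp only: cauchy_sq_vec_def prod.distrib prod_constant power_sum)
qed

lemma has_bochner_integral_cauchy_sq_vec:
  "has_bochner_integral lborel (cauchy_sq_vec :: real ^ 'n::finite \<Rightarrow> real) ((pi / 2) ^ CARD('n))"
  using has_bochner_integral_abs_monomial_cauchy_sq_vec [of "\<lambda>_::'n. 0"]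
  by simp

lemma has_bochner_integral_l1_norm_cauchy_sq_vec:
  "has_bochner_integral lborel (\<lambda>u::real ^ 'n::finite. (\<Sum>j\<in>UNIV. \<bar>u $ j\<bar>) * cauchy_sq_vec u)
     ((pi / 2) ^ CARD('n) * (CARD('n) * (2 / pi)))"
proof -
  have "has_bochner_integral lborel
      (\<lambda>u::real ^ 'n. \<Sum>i\<in>UNIV. (\<Prod>j\<in>UNIV. \<bar>u $ j\<bar> ^ of_bool (j = i)) * cauchy_sq_vec u)
      (\<Sum>i\<in>(UNIV :: 'n set). (pi / 2) ^ CARD('n) * (2 / pi) ^ (\<Sum>j\<in>UNIV. of_bool (j = i) mod 2))"
    by (intro has_bochner_integral_sum has_bochner_integral_abs_monomial_cauchy_sq_vec) auto
  then show ?thesis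
    by (simp add: of_bool_def if_distrib [where f = "\<lambda>k. _ ^ k"] sum_distrib_left sum_distrib_right
        mult_ac cong: if_cong)
qed

lemma has_bochner_integral_l1_norm_sq_cauchy_sq_vec:
  "has_bochner_integral lborel (\<lambda>u::real ^ 'n::finite. (\<Sum>j\<in>UNIV. \<bar>u $ j\<bar>)\<^sup>2 * cauchy_sq_vec u)
     ((pi / 2) ^ CARD('n) * (CARD('n) * (CARD('n) * (2 / pi)\<^sup>2 + (1 - (2 / pi)\<^sup>2))))"
proof -
  define e :: "'n \<Rightarrow> 'n \<Rightarrow> 'n \<Rightarrow> nat" where "e i k j = of_bool (j = i) + of_bool (j = k)" for i k j
  have parity: "(\<Sum>j\<in>UNIV. e i k j mod 2) = (if i = k then 0 else 2)" for i k
  proof (cases "i = k")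
    case False
    then have "e i k j mod 2 = e i k j" for j
      by (auto simp: e_def)
    with False show ?thesis
      by (simp add: e_def, subst sum.distrib, simp)
  qed (simp add: e_def)
  have monomial: "(\<Prod>j\<in>UNIV. \<bar>u $ j\<bar> ^ e i k j) = \<bar>u $ i\<bar> * \<bar>u $ k\<bar>" for u :: "real ^ 'n" and i k
    by (simp add: e_def power_add prod.distrib of_bool_def if_distrib [where f = "\<lambda>k. _ ^ k"]
        cong: if_cong)
  have integrand: "(\<Sum>j\<in>UNIV. \<bar>u $ j\<bar>)\<^sup>2 * cauchy_sq_vec u =
      (\<Sum>i\<in>UNIV. \<Sum>k\<in>UNIV. (\<Prod>j\<in>UNIV. \<bar>u $ j\<bar> ^ e i k j) * cauchy_sq_vec u)" for u :: "real ^ 'n"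
    unfolding monomial power2_eq_square sum_product by (simp only: sum_distrib_right)
  have "has_bochner_integral lborel (\<lambda>u::real ^ 'n. (\<Sum>j\<in>UNIV. \<bar>u $ j\<bar>)\<^sup>2 * cauchy_sq_vec u)
      (\<Sum>i\<in>UNIV. \<Sum>k\<in>UNIV. (pi / 2) ^ CARD('n) * (2 / pi) ^ (\<Sum>j\<in>UNIV. e i k j mod 2))"
    unfolding integrand
    by (intro has_bochner_integral_sum has_bochner_integral_abs_monomial_cauchy_sq_vec) (auto simp: e_def)
  moreover have "(2 / pi) ^ (if i = k then 0 else 2) = (2 / pi)\<^sup>2 + (if k = i then 1 - (2 / pi)\<^sup>2 else 0)"
    for i k :: 'n
    by auto
  ultimately show ?thesis
    by (simp add: parity sum_distrib_left [symmetric] sum.distrib algebra_simps)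
qed

lemma nn_integral_l1_norm_centered_sq_cauchy_sq_vec:
  "(\<integral>\<^sup>+u. ((\<Sum>j\<in>UNIV. \<bar>u $ j\<bar>) - CARD('n) * (2 / pi))\<^sup>2 * cauchy_sq_vec u
      \<partial>(lborel :: (real ^ 'n::finite) measure))
    = ennreal ((pi / 2) ^ CARD('n) * (CARD('n) * (1 - (2 / pi)\<^sup>2)))"
proof -
  let ?S = "\<lambda>u::real ^ 'n. \<Sum>j\<in>UNIV. \<bar>u $ j\<bar>"
  let ?c = "real CARD('n) * (2 / pi)"
  have "has_bochner_integral lborel
      (\<lambda>u. (?S u)\<^sup>2 * cauchy_sq_vec u - 2 * ?c * (?S u * cauchy_sq_vec u) + ?c\<^sup>2 * cauchy_sq_vec u)
      ((pi / 2) ^ CARD('n) * (CARD('n) * (CARD('n) * (2 / pi)\<^sup>2 + (1 - (2 / pi)\<^sup>2)))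
        - 2 * ?c * ((pi / 2) ^ CARD('n) * (CARD('n) * (2 / pi))) + ?c\<^sup>2 * (pi / 2) ^ CARD('n))"
    by (intro has_bochner_integral_add has_bochner_integral_diff has_bochner_integral_mult_right
        has_bochner_integral_l1_norm_sq_cauchy_sq_vec has_bochner_integral_l1_norm_cauchy_sq_vec
        has_bochner_integral_cauchy_sq_vec)
  moreover have "(?S u)\<^sup>2 * cauchy_sq_vec u - 2 * ?c * (?S u * cauchy_sq_vec u) + ?c\<^sup>2 * cauchy_sq_vec u
      = (?S u - ?c)\<^sup>2 * cauchy_sq_vec u" for u
    by (simp add: power2_eq_square algebra_simps)
  ultimately have "has_bochner_integral lborel (\<lambda>u. (?S u - ?c)\<^sup>2 * cauchy_sq_vec u)
      ((pi / 2) ^ CARD('n) * (CARD('n) * (1 - (2 / pi)\<^sup>2)))"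
    by (simp add: power2_eq_square algebra_simps)
  then show ?thesis
    by (simp add: has_bochner_integral_iff nn_integral_eq_integral cauchy_sq_vec_nonneg)
qed

lemma Chebyshev_ineq_nn_integral_le:
  fixes f w :: "'a \<Rightarrow> real"
  assumes [measurable]: "f \<in> borel_measurable M" "w \<in> borel_measurable M"
    and w_nonneg: "\<And>x. 0 \<le> w x" and "c < s"
  shows "(\<integral>\<^sup>+x. indicator {x. s < f x} x * ennreal (w x) \<partial>M) \<le>
    ennreal (1 / (s - c)\<^sup>2) * (\<integral>\<^sup>+x. (f x - c)\<^sup>2 * w x \<partial>M)"
proof -
  have "indicator {x. s < f x} x * ennreal (w x) \<le> ennreal (1 / (s - c)\<^sup>2) * ennreal ((f x - c)\<^sup>2 * w x)"
    for x
  proof (cases "s < f x")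
    case True
    then have "(s - c)\<^sup>2 \<le> (f x - c)\<^sup>2"
      using \<open>c < s\<close> by (intro power_mono) auto
    then have "w x \<le> 1 / (s - c)\<^sup>2 * ((f x - c)\<^sup>2 * w x)"
      using \<open>c < s\<close> w_nonneg [of x] by (simp add: field_simps mult_left_mono)
    with True show ?thesis
      by (subst ennreal_mult [symmetric]) (auto intro: ennreal_leI simp: w_nonneg)
  qed simp
  then have "(\<integral>\<^sup>+x. indicator {x. s < f x} x * ennreal (w x) \<partial>M) \<le>
      (\<integral>\<^sup>+x. ennreal (1 / (s - c)\<^sup>2) * ennreal ((f x - c)\<^sup>2 * w x) \<partial>M)"
    by (rule nn_integral_mono)
  also have "\<dots> = ennreal (1 / (s - c)\<^sup>2) * (\<integral>\<^sup>+x. (f x - c)\<^sup>2 * w x \<partial>M)"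
    by (rule nn_integral_cmult) measurable
  finally show ?thesis .
qed

theorem lemma4:
  fixes s :: real
  assumes "s > real CARD('n::finite)"
  shows "ennreal (1 / (pi / 2) ^ CARD('n)) *
           (\<integral>\<^sup>+ u. indicator {u :: real ^ 'n. (\<Sum>j\<in>UNIV. \<bar>u $ j\<bar>) > s} u *
               ennreal (\<Prod>j\<in>UNIV. 1 / (1 + (u $ j)\<^sup>2)\<^sup>2) \<partial>lborel)
         \<le> ennreal (real CARD('n) / (s - real CARD('n))\<^sup>2)"
proof -
  let ?M = "real CARD('n)"
  let ?c = "?M * (2 / pi)"
  have "2 / pi \<le> 1"
    using pi_ge_two by simp
  then have "?c \<le> ?M"
    by (rule mult_left_le) simp
  with assms have "?c < s"
    by linarith
  have weight: "(\<Prod>j\<in>UNIV. 1 / (1 + (u $ j)\<^sup>2)\<^sup>2) = cauchy_sq_vec u" for u :: "real ^ 'n"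
    by (simp add: cauchy_sq_vec_def cauchy_sq_def)
  have "(\<integral>\<^sup>+ u. indicator {u :: real ^ 'n. s < (\<Sum>j\<in>UNIV. \<bar>u $ j\<bar>)} u * ennreal (cauchy_sq_vec u) \<partial>lborel)
      \<le> ennreal (1 / (s - ?c)\<^sup>2) *
        (\<integral>\<^sup>+u. ((\<Sum>j\<in>UNIV. \<bar>u $ j\<bar>) - ?c)\<^sup>2 * cauchy_sq_vec u \<partial>(lborel :: (real ^ 'n) measure))"
    by (rule Chebyshev_ineq_nn_integral_le) (use \<open>?c < s\<close> in \<open>auto simp: cauchy_sq_vec_nonneg\<close>)
  then have "ennreal (1 / (pi / 2) ^ CARD('n)) *
      (\<integral>\<^sup>+ u. indicator {u :: real ^ 'n. s < (\<Sum>j\<in>UNIV. \<bar>u $ j\<bar>)} u * ennreal (cauchy_sq_vec u) \<partial>lborel)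
      \<le> ennreal (1 / (pi / 2) ^ CARD('n)) *
          (ennreal (1 / (s - ?c)\<^sup>2) * ennreal ((pi / 2) ^ CARD('n) * (?M * (1 - (2 / pi)\<^sup>2))))"
    unfolding nn_integral_l1_norm_centered_sq_cauchy_sq_vec by (rule mult_left_mono) simp
  also have "\<dots> = ennreal (?M * (1 - (2 / pi)\<^sup>2) / (s - ?c)\<^sup>2)"
    using \<open>2 / pi \<le> 1\<close> by (simp add: ennreal_mult'' [symmetric] power_le_one)
  also have "\<dots> \<le> ennreal (?M / (s - ?M)\<^sup>2)"
    using assms \<open>?c \<le> ?M\<close> by (intro ennreal_leI frac_le power_mono) auto
  finally show ?thesis
    unfolding weight .
qed

end
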